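(* Suppose $(\lambda_*,z_* )$ is a minimizer of QEPmin. Then a minimizer $v_*$ of CRQopt is given by $v_*=n_0-\frac{\gamma^2}{b_0^{\top}z_*}(PAP-\lambda_*I)z_*$ if $b_0^{\top}z_*\neq0$, and $v_*=n_0+x_*+\sqrt{\gamma^2-\|x_*\|^2}\,\frac{z_*}{\|z_*\|}$ if $b_0^{\top}z_*=0$, where in the latter case $x_*=-(PAP-\lambda_*I)^{\dagger}b_0$, and it is guaranteed that $\|x_*\|\le\gamma$.
   Context: Let $A\in\mathbb{R}^{n\times n}$ be symmetric, $C\in\mathbb{R}^{n\times m}$ ($m<n$) full column rank, $b\in\mathbb{R}^m$, $n_0=C(C^{\top}C)^{-1}b$ with $\|n_0\|<1$, $\gamma=\sqrt{1-\|n_0\|^2}$, $P=I-C(C^{\top}C)^{-1}C^{\top}$ (orthogonal projector onto $\mathcal N(C^{\top})$), $b_0=PAn_0$, assumed nonzero. $X^\dagger$ is the Moore–Penrose inverse. CRQopt: minimize $v^{\top}Av$ over $v\in\mathbb{R}^n$ subject to $v^{\top}v=1$ and $C^{\top}v=b$. QEPmin: minimize $\lambda$ over pairs $(\lambda,z)$ with $\lambda\in\mathbb{R}$, $0\neq z\in\mathcal N(C^{\top})$ and $(PAP-\lambda I)^2z=\gamma^{-2}b_0b_0^{\top}z$. *)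

theory Defs
  imports "HOL-Analysis.Analysis"
begin

text \<open>Moore--Penrose inverse, defined by the four Penrose conditions (it exists and is unique).\<close>
definition mp_pinv :: "real^'n^'n \<Rightarrow> real^'n^'n" where
  "mp_pinv X = (THE Y. X ** Y ** X = X \<and> Y ** X ** Y = Y \<and>
      transpose (X ** Y) = X ** Y \<and> transpose (Y ** X) = Y ** X)"

definition n0 :: "real^'m^'n \<Rightarrow> real^'m \<Rightarrow> real^'n" where
  "n0 C b = C *v (matrix_inv (transpose C ** C) *v b)"

definition gam :: "real^'m^'n \<Rightarrow> real^'m \<Rightarrow> real" where
  "gam C b = sqrt (1 - (norm (n0 C b))\<^sup>2)"

definition projP :: "real^'m^'n \<Rightarrow> real^'n^'n" where
  "projP C = mat 1 - C ** matrix_inv (transpose C ** C) ** transpose C"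

definition b0 :: "real^'n^'n \<Rightarrow> real^'m^'n \<Rightarrow> real^'m \<Rightarrow> real^'n" where
  "b0 A C b = projP C *v (A *v n0 C b)"

definition outer :: "real^'n \<Rightarrow> real^'n \<Rightarrow> real^'n^'n" where
  "outer x y = (\<chi> i j. x $ i * y $ j)"

definition CRQ_feasible :: "real^'m^'n \<Rightarrow> real^'m \<Rightarrow> real^'n \<Rightarrow> bool" where
  "CRQ_feasible C b v \<longleftrightarrow> v \<bullet> v = 1 \<and> transpose C *v v = b"

definition CRQ_minimizer :: "real^'n^'n \<Rightarrow> real^'m^'n \<Rightarrow> real^'m \<Rightarrow> real^'n \<Rightarrow> bool" where
  "CRQ_minimizer A C b v \<longleftrightarrow> CRQ_feasible C b v \<and>
     (\<forall>w. CRQ_feasible C b w \<longrightarrow> v \<bullet> (A *v v) \<le> w \<bullet> (A *v w))"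

definition QEP_feasible :: "real^'n^'n \<Rightarrow> real^'m^'n \<Rightarrow> real^'m \<Rightarrow> real \<Rightarrow> real^'n \<Rightarrow> bool" where
  "QEP_feasible A C b lam z \<longleftrightarrow> z \<noteq> 0 \<and> transpose C *v z = 0 \<and>
     ((projP C ** A ** projP C - lam *\<^sub>R mat 1) ** (projP C ** A ** projP C - lam *\<^sub>R mat 1)) *v z
       = (inverse ((gam C b)\<^sup>2) *\<^sub>R outer (b0 A C b) (b0 A C b)) *v z"

definition QEP_minimizer :: "real^'n^'n \<Rightarrow> real^'m^'n \<Rightarrow> real^'m \<Rightarrow> real \<Rightarrow> real^'n \<Rightarrow> bool" where
  "QEP_minimizer A C b lam z \<longleftrightarrow> QEP_feasible A C b lam z \<and>
     (\<forall>mu w. QEP_feasible A C b mu w \<longrightarrow> lam \<le> mu)"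

end

theory Submission
  imports Defs
begin

text \<open>Substituting \<open>v = n\<^sub>0 + u\<close> with \<open>u \<in> N(C')\<close> turns CRQopt into the trust-region
  subproblem of minimising \<open>u'PAPu + 2 b\<^sub>0'u\<close> over the sphere \<open>\<parallel>u\<parallel> = \<gamma>\<close> in \<open>N(C')\<close>.
  A point \<open>u\<close> of that sphere is a global minimiser as soon as \<open>(PAP - \<lambda>I)u = -b\<^sub>0\<close> for some
  \<open>\<lambda>\<close> such that \<open>PAP - \<lambda>I\<close> is positive semidefinite on \<open>N(C')\<close>; conversely a minimiser exists
  by compactness and has such a multiplier \<open>\<lambda>\<close>. Every such \<open>\<lambda>\<close> is an eigenvalue of QEPmin,
  so \<open>\<lambda>\<^sub>* \<le> \<lambda>\<close> and \<open>PAP - \<lambda>\<^sub>*I\<close> is positive semidefinite on \<open>N(C')\<close> as well. It remains to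
  solve \<open>(PAP - \<lambda>\<^sub>*I)u = -b\<^sub>0\<close> on the sphere. If \<open>b\<^sub>0'z\<^sub>* \<noteq> 0\<close>, the QEP itself shows that a
  multiple of \<open>(PAP - \<lambda>\<^sub>*I)z\<^sub>*\<close> does. If \<open>b\<^sub>0'z\<^sub>* = 0\<close>, then \<open>z\<^sub>*\<close> is an eigenvector of \<open>PAP\<close>,
  which forces \<open>\<lambda>\<^sub>* = \<lambda>\<close>; the least-norm solution \<open>x\<^sub>*\<close> is then completed to the sphere
  along \<open>z\<^sub>*\<close>.\<close>

declare transpose_matrix_vector [simp del]

section \<open>Symmetric matrices\<close>

lemma inner_matrix_vector_transpose:
  fixes A :: "real^'m^'n"
  shows "(A *v x) \<bullet> y = x \<bullet> (transpose A *v y)"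
  by (metis dot_lmul_matrix inner_commute transpose_matrix_vector)

lemma symmetric_matrix_inner:
  fixes A :: "real^'n^'n"
  assumes "transpose A = A"
  shows "(A *v x) \<bullet> y = x \<bullet> (A *v y)"
  using inner_matrix_vector_transpose[of A x y] assms by simp

lemma symmetric_matrixI:
  fixes A :: "real^'n^'n"
  assumes "\<And>x y. (A *v x) \<bullet> y = x \<bullet> (A *v y)"
  shows "transpose A = A"
proof -
  have "x \<bullet> (transpose A *v y - A *v y) = 0" for x y
    using inner_matrix_vector_transpose[of A x y] assms[of x y] by (simp add: inner_diff_right)
  then have "transpose A *v y = A *v y" for y
    by (metis inner_eq_zero_iff right_minus_eq)
  then show ?thesis
    by (simp add: matrix_eq)
qed

lemma transpose_diff: "transpose (A - B) = transpose A - transpose (B :: 'a::ab_group_add^'n^'m)"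
  by (simp add: transpose_def vec_eq_iff)

lemma matrix_vector_mult_uminus [simp]: "A *v (- x) = - (A *v (x :: 'a::ring_1^'n))"
  by (simp add: matrix_vector_mult_def vec_eq_iff sum_negf)

lemma matrix_add_rdistrib: "(A + B) ** C = A ** C + B ** (C :: 'a::semiring_1^'p^'n)"
  by (simp add: matrix_matrix_mult_def vec_eq_iff sum.distrib distrib_right)

lemma matrix_diff_ldistrib: "A ** (B - C) = A ** B - A ** (C :: 'a::ring_1^'p^'n)"
  by (simp add: matrix_matrix_mult_def vec_eq_iff sum_subtractf right_diff_distrib)

lemma matrix_diff_rdistrib: "(A - B) ** C = A ** C - B ** (C :: 'a::ring_1^'p^'n)"
  by (simp add: matrix_matrix_mult_def vec_eq_iff sum_subtractf left_diff_distrib)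

lemma symmetric_matrix_shift:
  fixes A :: "real^'n^'n"
  assumes "transpose A = A"
  shows "transpose (A - c *\<^sub>R mat 1) = A - c *\<^sub>R mat 1"
  using assms by (simp add: transpose_diff transpose_scalar)

lemma matrix_shift_mult_vector:
  fixes A :: "real^'n^'n"
  shows "(A - c *\<^sub>R mat 1) *v x = A *v x - c *\<^sub>R x"
  by (simp add: matrix_vector_mult_diff_rdistrib scaleR_matrix_vector_assoc[symmetric])

lemma outer_mult_vector: "outer x y *v z = (y \<bullet> z) *\<^sub>R x"
  unfolding outer_def matrix_vector_mult_def inner_vec_def
  by (simp add: vec_eq_iff sum_distrib_left sum_distrib_right mult_ac)

lemma symmetric_matrix_kernel_of_square:
  fixes M :: "real^'n^'n"
  assumes "transpose M = M" and "M *v (M *v x) = 0"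
  shows "M *v x = 0"
proof -
  have "(M *v x) \<bullet> (M *v x) = 0"
    using symmetric_matrix_inner[OF assms(1)] assms(2) by simp
  then show ?thesis by simp
qed

lemma symmetric_matrix_range_if_orthogonal_kernel:
  fixes M :: "real^'n^'n"
  assumes "transpose M = M" and "\<And>k. M *v k = 0 \<Longrightarrow> k \<bullet> v = 0"
  shows "\<exists>y. M *v y = v"
proof -
  have span_range: "span (range ((*v) M)) = range ((*v) M)"
    by (simp add: linear_subspace_image)
  obtain r k where r: "r \<in> range ((*v) M)" and k: "\<And>w. w \<in> range ((*v) M) \<Longrightarrow> orthogonal k w"
    and v: "v = r + k"
    using orthogonal_subspace_decomp_exists[of "range ((*v) M)" v] span_range by metis
  have "k \<bullet> (M *v (M *v k)) = 0"
    using k unfolding orthogonal_def by blast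
  then have "M *v k = 0"
    using symmetric_matrix_inner[OF assms(1)] by (metis inner_eq_zero_iff)
  then have "k \<bullet> k = 0"
    using assms(2)[of k] k[OF r] v by (simp add: orthogonal_def inner_add_right)
  then show ?thesis
    using r v by auto
qed

lemma invertible_if_kernel_trivial:
  fixes A :: "real^'n^'n"
  assumes "\<And>x. A *v x = 0 \<Longrightarrow> x = 0"
  shows "invertible A"
  using assms linear_injective_0[OF matrix_vector_mul_linear[of A]]
    matrix_left_invertible_injective invertible_left_inverse by metis

lemma orthogonal_projector_exists:
  fixes K :: "(real^'n) set"
  assumes "subspace K"
  obtains Q :: "real^'n^'n"
  where "transpose Q = Q" and "\<And>x. Q *v x \<in> K" and "\<And>k. k \<in> K \<Longrightarrow> Q *v k = k"
proof -
  obtain T where T: "pairwise orthogonal T" "span T = K"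
    using orthogonal_basis_subspace[OF assms] by metis
  define q where "q x = (\<Sum>t\<in>T. (t \<bullet> x / (t \<bullet> t)) *\<^sub>R t)" for x
  have "linear q"
    unfolding linear_iff q_def
    by (simp add: inner_add_right add_divide_distrib scaleR_add_left sum.distrib scaleR_sum_right)
  then have Qq: "matrix q *v x = q x" for x
    by (simp add: matrix_works)
  have "q x \<in> span T" for x
    unfolding q_def by (intro span_sum span_mul span_base)
  then have q_in_K: "q x \<in> K" for x
    using T(2) by blast
  have q_fixes_K: "q k = k" if "k \<in> K" for k
  proof -
    have "k - q k \<in> span T"
      using T(2) that q_in_K assms by (simp add: subspace_diff)
    then have "orthogonal (k - q k) (k - q k)"
      using Gram_Schmidt_step[OF T(1), of "k - q k" k] unfolding q_def by simp
    then show ?thesis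
      unfolding orthogonal_def by simp
  qed
  have "q x \<bullet> y = x \<bullet> q y" for x y
    unfolding q_def inner_sum_left inner_sum_right
    by (rule sum.cong) (simp_all add: inner_commute)
  then have "transpose (matrix q) = matrix q"
    by (intro symmetric_matrixI) (simp add: Qq)
  then show ?thesis
    by (rule that) (simp_all add: Qq q_in_K q_fixes_K)
qed

section \<open>The Moore--Penrose inverse of a symmetric matrix\<close>

definition penrose_conditions :: "real^'n^'n \<Rightarrow> real^'n^'n \<Rightarrow> bool" where
  "penrose_conditions X Y \<longleftrightarrow> X ** Y ** X = X \<and> Y ** X ** Y = Y \<and>
      transpose (X ** Y) = X ** Y \<and> transpose (Y ** X) = Y ** X"

lemma penrose_conditions_unique:
  assumes "penrose_conditions X Y1" and "penrose_conditions X Y2"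
  shows "Y1 = Y2"
proof -
  have 1: "X ** Y1 ** X = X" "Y1 ** X ** Y1 = Y1"
      "transpose (X ** Y1) = X ** Y1" "transpose (Y1 ** X) = Y1 ** X"
    using assms(1) unfolding penrose_conditions_def by auto
  have 2: "X ** Y2 ** X = X" "Y2 ** X ** Y2 = Y2"
      "transpose (X ** Y2) = X ** Y2" "transpose (Y2 ** X) = Y2 ** X"
    using assms(2) unfolding penrose_conditions_def by auto
  have "X ** Y1 = (X ** Y2) ** (X ** Y1)"
    using 2(1) by (metis matrix_mul_assoc)
  then have "X ** Y1 = transpose (X ** Y1) ** transpose (X ** Y2)"
    using 1(3) by (metis matrix_transpose_mul)
  then have XY: "X ** Y1 = X ** Y2"
    using 1(1,3) 2(3) by (metis matrix_mul_assoc)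
  have "Y1 ** X = (Y1 ** X) ** (Y2 ** X)"
    using 2(1) by (metis matrix_mul_assoc)
  then have "Y1 ** X = transpose (Y2 ** X) ** transpose (Y1 ** X)"
    using 1(4) by (metis matrix_transpose_mul)
  then have YX: "Y1 ** X = Y2 ** X"
    using 1(1,4) 2(4) by (metis matrix_mul_assoc)
  have "Y1 = Y1 ** (X ** Y2)"
    using 1(2) XY by (metis matrix_mul_assoc)
  also have "\<dots> = Y2"
    using 2(2) YX by (metis matrix_mul_assoc)
  finally show ?thesis .
qed

lemma penrose_conditions_exist_symmetric:
  fixes M :: "real^'n^'n"
  assumes symM: "transpose M = M"
  shows "\<exists>Y. penrose_conditions M Y"
proof -
  have "subspace {x. M *v x = 0}"
    by (simp add: subspace_def matrix_vector_right_distrib matrix_vector_mult_scaleR)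
  then obtain Q where symQ: "transpose Q = Q"
    and MQ: "\<And>x. M *v (Q *v x) = 0" and QK: "\<And>k. M *v k = 0 \<Longrightarrow> Q *v k = k"
    using orthogonal_projector_exists by (metis (mono_tags) mem_Collect_eq)
  have MQ0: "M ** Q = 0"
    by (simp add: matrix_eq MQ flip: matrix_vector_mul_assoc)
  have "Q ** M = transpose (M ** Q)"
    using symM symQ by (simp add: matrix_transpose_mul)
  then have QM0: "Q ** M = 0"
    using MQ0 by (simp add: transpose_def vec_eq_iff)
  have QQ: "Q ** Q = Q"
    by (simp add: matrix_eq MQ QK flip: matrix_vector_mul_assoc)
  define E where "E = M + Q"
  have QE: "Q ** E = Q"
    unfolding E_def by (simp add: matrix_add_ldistrib QM0 QQ)
  have "x = 0" if "E *v x = 0" for x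
  proof -
    have "Q *v x = 0"
      using arg_cong[OF that, of "(*v) Q"] QE by (simp add: matrix_vector_mul_assoc)
    moreover have "M *v x = - (Q *v x)"
      using that unfolding E_def by (simp add: matrix_vector_mult_add_rdistrib eq_neg_iff_add_eq_0)
    ultimately show "x = 0"
      using QK by fastforce
  qed
  then have "invertible E"
    by (rule invertible_if_kernel_trivial)
  then obtain F where EF: "E ** F = mat 1" and FE: "F ** E = mat 1"
    unfolding invertible_def by blast
  have "F ** Q = Q"
    using FE MQ0 QQ unfolding E_def by (metis matrix_add_rdistrib matrix_mul_assoc matrix_mul_lid add_0)
  have "Q ** F = Q"
    using QE EF by (metis matrix_mul_assoc matrix_mul_rid)
  \<comment> \<open>the classical formula \<open>M\<^sup>+ = (M + Q)\<^sup>-\<^sup>1 - Q\<close>, \<open>Q\<close> the orthogonal projector onto \<open>ker M\<close>\<close>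
  define Y where "Y = F - Q"
  have MY: "M ** Y = mat 1 - Q"
    using EF \<open>Q ** F = Q\<close> MQ0 unfolding Y_def E_def
    by (simp add: matrix_diff_ldistrib matrix_add_rdistrib eq_diff_eq)
  have YM: "Y ** M = mat 1 - Q"
    using FE \<open>F ** Q = Q\<close> QM0 unfolding Y_def E_def
    by (simp add: matrix_diff_rdistrib matrix_add_ldistrib eq_diff_eq)
  have "M ** Y ** M = M"
    using MY QM0 by (simp add: matrix_diff_rdistrib)
  moreover have "Y ** M ** Y = Y"
    using YM \<open>Q ** F = Q\<close> QQ unfolding Y_def by (simp add: matrix_diff_rdistrib matrix_diff_ldistrib)
  moreover have "transpose (mat 1 - Q) = mat 1 - Q"
    using symQ by (simp add: transpose_diff)
  ultimately show ?thesis
    unfolding penrose_conditions_def using MY YM by metis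
qed

lemma penrose_conditions_mp_pinv:
  fixes M :: "real^'n^'n"
  assumes "transpose M = M"
  shows "penrose_conditions M (mp_pinv M)"
proof -
  obtain Y where "penrose_conditions M Y"
    using penrose_conditions_exist_symmetric[OF assms] by blast
  then show ?thesis
    unfolding mp_pinv_def penrose_conditions_def[symmetric]
    by (metis penrose_conditions_unique theI)
qed

lemma norm_orthogonal_projector_le:
  fixes R :: "real^'n^'n"
  assumes "transpose R = R" and "R ** R = R"
  shows "norm (R *v x) \<le> norm x"
proof -
  have "(norm (R *v x))\<^sup>2 = x \<bullet> (R *v x)"
    using symmetric_matrix_inner[OF assms(1), of x "R *v x"] assms(2)
    by (simp add: power2_norm_eq_inner matrix_vector_mul_assoc)
  also have "\<dots> \<le> norm x * norm (R *v x)"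
    by (rule norm_cauchy_schwarz)
  finally show ?thesis
    by (metis mult_le_cancel_right norm_ge_zero power2_eq_square linorder_not_le less_eq_real_def)
qed

lemma mp_pinv_least_norm_solution:
  fixes M :: "real^'n^'n"
  assumes symM: "transpose M = M" and "M *v u = g"
  shows "M *v (mp_pinv M *v g) = g" and "norm (mp_pinv M *v g) \<le> norm u"
    and "\<exists>v. mp_pinv M *v g = M *v v"
proof -
  define Y where "Y = mp_pinv M"
  have pen: "M ** Y ** M = M" "Y ** M ** Y = Y" "transpose (Y ** M) = Y ** M"
    using penrose_conditions_mp_pinv[OF symM] unfolding penrose_conditions_def Y_def by auto
  have sol: "Y *v g = (Y ** M) *v u"
    using assms(2) by (simp flip: matrix_vector_mul_assoc)
  show "M *v (mp_pinv M *v g) = g"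
    using pen(1) assms(2) unfolding sol Y_def[symmetric] by (simp add: matrix_vector_mul_assoc matrix_mul_assoc)
  have "(Y ** M) ** (Y ** M) = Y ** M"
    using pen(2) by (simp add: matrix_mul_assoc)
  then show "norm (mp_pinv M *v g) \<le> norm u"
    unfolding Y_def[symmetric] sol using norm_orthogonal_projector_le pen(3) by blast
  have "Y ** M = M ** transpose Y"
    using pen(3) symM by (metis matrix_transpose_mul)
  then show "\<exists>v. mp_pinv M *v g = M *v v"
    unfolding Y_def[symmetric] sol by (metis matrix_vector_mul_assoc)
qed

section \<open>The projector onto the null space of \<open>C'\<close>\<close>

lemma matrix_inv_inverse:
  fixes A :: "real^'n^'n"
  assumes "invertible A"
  shows "A ** matrix_inv A = mat 1" and "matrix_inv A ** A = mat 1"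
  using someI_ex[OF assms[unfolded invertible_def]] unfolding matrix_inv_def by auto

lemma symmetric_matrix_inv:
  fixes A :: "real^'n^'n"
  assumes "transpose A = A" and "invertible A"
  shows "transpose (matrix_inv A) = matrix_inv A"
proof -
  have "transpose (matrix_inv A) ** A = mat 1"
    using matrix_inv_inverse(1)[OF assms(2)] assms(1) by (metis matrix_transpose_mul transpose_mat)
  then show ?thesis
    using matrix_inv_inverse(1)[OF assms(2)] by (metis matrix_mul_assoc matrix_mul_lid matrix_mul_rid)
qed

lemma invertible_gram_matrix:
  fixes C :: "real^'m^'n"
  assumes "rank C = CARD('m)"
  shows "invertible (transpose C ** C)"
proof (rule invertible_if_kernel_trivial)
  fix x assume "(transpose C ** C) *v x = 0"
  then have "(C *v x) \<bullet> (C *v x) = 0"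
    by (simp add: inner_matrix_vector_transpose matrix_vector_mul_assoc)
  then show "x = 0"
    using assms full_rank_injective by (metis inner_eq_zero_iff injD matrix_vector_mult_0_right)
qed

lemma projP_mult_vector:
  "projP C *v x = x - C *v (matrix_inv (transpose C ** C) *v (transpose C *v x))"
  unfolding projP_def
  by (simp add: matrix_vector_mult_diff_rdistrib matrix_vector_mul_assoc matrix_mul_assoc)

context
  fixes C :: "real^'m^'n"
  assumes full_rank: "rank C = CARD('m)"
begin

lemma gram_inverse_cancel: "transpose C *v (C *v (matrix_inv (transpose C ** C) *v y)) = y"
  using matrix_inv_inverse(1)[OF invertible_gram_matrix[OF full_rank]]
  by (metis matrix_vector_mul_assoc matrix_vector_mul_lid)

lemma symmetric_projP: "transpose (projP C) = projP C"
  using symmetric_matrix_inv[OF _ invertible_gram_matrix[OF full_rank]]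
  unfolding projP_def by (simp add: transpose_diff matrix_transpose_mul matrix_mul_assoc)

lemma transpose_mult_projP: "transpose C *v (projP C *v x) = 0"
  by (simp add: projP_mult_vector matrix_vector_mult_diff_distrib gram_inverse_cancel)

lemma projP_fixes_null: "transpose C *v z = 0 \<Longrightarrow> projP C *v z = z"
  by (simp add: projP_mult_vector)

lemma transpose_mult_n0: "transpose C *v n0 C b = b"
  unfolding n0_def by (rule gram_inverse_cancel)

lemma n0_orthogonal_null: "transpose C *v u = 0 \<Longrightarrow> n0 C b \<bullet> u = 0"
  unfolding n0_def by (simp add: inner_matrix_vector_transpose)

end

section \<open>The trust-region subproblem\<close>

lemma nonneg_at_0_if_nonneg_right:
  fixes f :: "real \<Rightarrow> real"
  assumes "isCont f 0" and "\<And>t. 0 < t \<Longrightarrow> 0 \<le> f t"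
  shows "0 \<le> f 0"
proof (rule tendsto_lowerbound)
  show "(f \<longlongrightarrow> f 0) (at_right 0)"
    using assms(1) by (simp add: isCont_def filterlim_at_split)
  show "\<forall>\<^sub>F t in at_right 0. 0 \<le> f t"
    using assms(2) eventually_at_right_less[of 0] by (rule eventually_mono[rotated]) simp
qed simp

lemma quadratic_form_add_scaled:
  fixes B :: "real^'n^'n"
  assumes "transpose B = B"
  shows "(x + t *\<^sub>R y) \<bullet> (B *v (x + t *\<^sub>R y))
    = x \<bullet> (B *v x) + 2 * t * (y \<bullet> (B *v x)) + t\<^sup>2 * (y \<bullet> (B *v y))"
  using symmetric_matrix_inner[OF assms, of y x]
  by (simp add: inner_commute power2_eq_square algebra_simps)

definition trs_objective :: "real^'n^'n \<Rightarrow> real^'n \<Rightarrow> real^'n \<Rightarrow> real" where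
  "trs_objective B g u = u \<bullet> (B *v u) + 2 * (g \<bullet> u)"

definition trs_minimizer :: "real^'n^'n \<Rightarrow> real^'n \<Rightarrow> (real^'n) set \<Rightarrow> real \<Rightarrow> real^'n \<Rightarrow> bool" where
  "trs_minimizer B g S \<gamma> u \<longleftrightarrow> u \<in> S \<and> norm u = \<gamma> \<and>
     (\<forall>w\<in>S. norm w = \<gamma> \<longrightarrow> trs_objective B g u \<le> trs_objective B g w)"

lemma trs_objective_add_scaled:
  fixes B :: "real^'n^'n"
  assumes "transpose B = B"
  shows "trs_objective B g (u + s *\<^sub>R d)
    = trs_objective B g u + 2 * s * (d \<bullet> (B *v u + g)) + s\<^sup>2 * (d \<bullet> (B *v d))"
  unfolding trs_objective_def quadratic_form_add_scaled[OF assms]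
  by (simp add: inner_commute algebra_simps)

lemma trs_objective_diff_on_sphere:
  fixes B :: "real^'n^'n"
  assumes "transpose B = B" and "B *v u - lam *\<^sub>R u = - g" and "norm w = norm u"
  shows "trs_objective B g w - trs_objective B g u
    = (w - u) \<bullet> (B *v (w - u)) - lam * ((w - u) \<bullet> (w - u))"
proof -
  have g: "g = lam *\<^sub>R u - B *v u"
    using assms(2) by (simp add: algebra_simps)
  have "w \<bullet> w = u \<bullet> u"
    using assms(3) by (simp add: power2_norm_eq_inner[symmetric])
  then show ?thesis
    using symmetric_matrix_inner[OF assms(1), of u w] unfolding trs_objective_def g
    by (simp add: inner_commute algebra_simps)
qed

lemma trs_minimizerI:
  fixes B :: "real^'n^'n"
  assumes "transpose B = B" and "subspace S" and "u \<in> S" and "norm u = \<gamma>"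
    and "B *v u - lam *\<^sub>R u = - g" and "\<And>d. d \<in> S \<Longrightarrow> lam * (d \<bullet> d) \<le> d \<bullet> (B *v d)"
  shows "trs_minimizer B g S \<gamma> u"
  unfolding trs_minimizer_def
proof (intro conjI ballI impI assms(3,4))
  fix w assume "w \<in> S" and "norm w = \<gamma>"
  then have "0 \<le> trs_objective B g w - trs_objective B g u"
    using trs_objective_diff_on_sphere[OF assms(1,5)] assms(2-4,6) by (simp add: subspace_diff)
  then show "trs_objective B g u \<le> trs_objective B g w"
    by simp
qed

lemma trs_minimizer_exists:
  fixes B :: "real^'n^'n"
  assumes "subspace S" and "x \<in> S" and "x \<noteq> 0" and "0 \<le> \<gamma>"
  shows "\<exists>u. trs_minimizer B g S \<gamma> u"
proof -
  have "compact (S \<inter> sphere 0 \<gamma>)"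
    using closed_subspace[OF assms(1)] compact_sphere by (rule closed_Int_compact)
  moreover have "(\<gamma> / norm x) *\<^sub>R x \<in> S \<inter> sphere 0 \<gamma>"
    using assms by (simp add: subspace_scale)
  moreover have "continuous_on (S \<inter> sphere 0 \<gamma>) (trs_objective B g)"
    unfolding trs_objective_def by (intro continuous_intros)
  ultimately obtain u where "u \<in> S \<inter> sphere 0 \<gamma>"
    and "\<forall>w \<in> S \<inter> sphere 0 \<gamma>. trs_objective B g u \<le> trs_objective B g w"
    using continuous_attains_inf by blast
  then show ?thesis
    unfolding trs_minimizer_def by auto
qed

lemma norm_add_reflection:
  fixes u d :: "'a::real_inner"
  assumes "s * (d \<bullet> d) = - 2 * (u \<bullet> d)"
  shows "norm (u + s *\<^sub>R d) = norm u"
proof -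
  have "(u + s *\<^sub>R d) \<bullet> (u + s *\<^sub>R d) = u \<bullet> u + s * (2 * (u \<bullet> d) + s * (d \<bullet> d))"
    by (simp add: inner_commute algebra_simps)
  then show ?thesis
    using assms by (simp add: norm_eq_sqrt_inner)
qed

lemma norm_add_scaled_orthogonal_unit:
  fixes x z :: "'a::real_inner"
  assumes "x \<bullet> z = 0" and "z \<noteq> 0" and "norm x \<le> \<gamma>"
  shows "norm (x + sqrt (\<gamma>\<^sup>2 - (norm x)\<^sup>2) *\<^sub>R ((1 / norm z) *\<^sub>R z)) = \<gamma>"
proof -
  define s where "s = sqrt (\<gamma>\<^sup>2 - (norm x)\<^sup>2)"
  have "s\<^sup>2 = \<gamma>\<^sup>2 - (norm x)\<^sup>2"
    unfolding s_def using assms(3) norm_ge_zero[of x] by (simp add: power_mono)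
  moreover have "(norm ((1 / norm z) *\<^sub>R z))\<^sup>2 = 1"
    using assms(2) by simp
  ultimately have "(norm (x + s *\<^sub>R ((1 / norm z) *\<^sub>R z)))\<^sup>2 = \<gamma>\<^sup>2"
    using assms(1) unfolding power2_norm_eq_inner
    by (simp add: inner_add_left inner_add_right inner_commute power2_eq_square)
  then show ?thesis
    unfolding s_def using assms(3) norm_ge_zero[of x] by simp
qed

text \<open>Compare \<open>u\<close> with its reflection in the hyperplane orthogonal to \<open>d\<close>.\<close>
lemma trs_reflection_inequality:
  fixes B :: "real^'n^'n"
  assumes "transpose B = B" and "subspace S" and "trs_minimizer B g S \<gamma> u"
    and "d \<in> S" and "0 < u \<bullet> d"
  shows "(d \<bullet> (B *v u + g)) * (d \<bullet> d) \<le> (u \<bullet> d) * (d \<bullet> (B *v d))"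
proof -
  define s where "s = - 2 * (u \<bullet> d) / (d \<bullet> d)"
  have "d \<noteq> 0"
    using assms(5) by auto
  then have dd: "0 < d \<bullet> d"
    by simp
  have "norm (u + s *\<^sub>R d) = \<gamma>"
    using assms(3) norm_add_reflection[of s d u] dd unfolding trs_minimizer_def s_def
    by (simp add: inner_commute)
  moreover have "u + s *\<^sub>R d \<in> S"
    using assms(2-4) unfolding trs_minimizer_def by (simp add: subspace_add subspace_scale)
  ultimately have "0 \<le> 2 * s * (d \<bullet> (B *v u + g)) + s\<^sup>2 * (d \<bullet> (B *v d))"
    using assms(3) trs_objective_add_scaled[OF assms(1), of g u s d]
    unfolding trs_minimizer_def by fastforce
  also have "\<dots> = (4 * (u \<bullet> d) / (d \<bullet> d)\<^sup>2)
      * ((u \<bullet> d) * (d \<bullet> (B *v d)) - (d \<bullet> (B *v u + g)) * (d \<bullet> d))"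
    unfolding s_def using dd by (simp add: field_simps power2_eq_square)
  finally show ?thesis
    using assms(5) dd by (simp add: zero_le_divide_iff zero_le_mult_iff)
qed

lemma trs_tangent_inequality:
  fixes B :: "real^'n^'n"
  assumes symB: "transpose B = B" and S: "subspace S" and min: "trs_minimizer B g S \<gamma> u"
    and "0 < \<gamma>" and "e \<in> S" and ue: "u \<bullet> e = 0"
  shows "(e \<bullet> (B *v u + g)) * (e \<bullet> e) \<le> 0"
proof -
  have uS: "u \<in> S" and uu: "u \<bullet> u = \<gamma>\<^sup>2"
    using min unfolding trs_minimizer_def by (auto simp: power2_norm_eq_inner)
  define h where "h = B *v u + g"
  define f where "f t = t * \<gamma>\<^sup>2 * (e \<bullet> (B *v e) + 2 * t * (u \<bullet> (B *v e)) + t\<^sup>2 * (u \<bullet> (B *v u)))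
      - (e \<bullet> h + t * (u \<bullet> h)) * (e \<bullet> e + t\<^sup>2 * \<gamma>\<^sup>2)" for t
  have "0 \<le> f 0"
  proof (rule nonneg_at_0_if_nonneg_right)
    show "isCont f 0"
      unfolding f_def by (intro continuous_intros)
    fix t :: real assume "0 < t"
    have "u \<bullet> (e + t *\<^sub>R u) = t * \<gamma>\<^sup>2"
      using ue uu by (simp add: inner_add_right)
    moreover have "(e + t *\<^sub>R u) \<bullet> (e + t *\<^sub>R u) = e \<bullet> e + t\<^sup>2 * \<gamma>\<^sup>2"
      using ue uu by (simp add: inner_add_left inner_add_right inner_commute power2_eq_square)
    moreover have "e + t *\<^sub>R u \<in> S"
      using S \<open>e \<in> S\<close> uS by (simp add: subspace_add subspace_scale)
    ultimately show "0 \<le> f t"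
      using trs_reflection_inequality[OF symB S min, of "e + t *\<^sub>R u"] \<open>0 < t\<close> \<open>0 < \<gamma>\<close>
      unfolding f_def quadratic_form_add_scaled[OF symB] h_def
      by (simp add: inner_add_left inner_commute)
  qed
  then show ?thesis
    unfolding f_def h_def by simp
qed

lemma trs_minimizer_first_order:
  fixes B :: "real^'n^'n"
  assumes symB: "transpose B = B" and S: "subspace S" and BS: "\<And>x. x \<in> S \<Longrightarrow> B *v x \<in> S"
    and "g \<in> S" and "0 < \<gamma>" and min: "trs_minimizer B g S \<gamma> u"
  shows "\<exists>lam. B *v u - lam *\<^sub>R u = - g"
proof -
  have uS: "u \<in> S" and uu: "u \<bullet> u = \<gamma>\<^sup>2"
    using min unfolding trs_minimizer_def by (auto simp: power2_norm_eq_inner)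
  define h where "h = B *v u + g"
  define lam where "lam = (u \<bullet> h) / \<gamma>\<^sup>2"
  define e where "e = h - lam *\<^sub>R u"
  have "e \<in> S"
    unfolding e_def h_def using S BS uS \<open>g \<in> S\<close> by (simp add: subspace_add subspace_diff subspace_scale)
  moreover have ue: "u \<bullet> e = 0"
    unfolding e_def lam_def using uu \<open>0 < \<gamma>\<close> by (simp add: inner_diff_right)
  moreover have "e \<bullet> h = e \<bullet> e"
    using ue unfolding e_def by (simp add: inner_diff_left inner_diff_right inner_commute)
  ultimately have "(e \<bullet> e) * (e \<bullet> e) \<le> 0"
    using trs_tangent_inequality[OF symB S min \<open>0 < \<gamma>\<close>] unfolding h_def by metis
  then have "e \<bullet> e \<le> 0"
    by (simp add: mult_le_0_iff)
  then have "e = 0"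
    by (metis inner_eq_zero_iff inner_ge_zero order_antisym)
  then have "B *v u - lam *\<^sub>R u = - g"
    unfolding e_def h_def by (simp add: algebra_simps eq_neg_iff_add_eq_0)
  then show ?thesis ..
qed

lemma trs_second_order_nonorthogonal:
  fixes B :: "real^'n^'n"
  assumes symB: "transpose B = B" and S: "subspace S" and min: "trs_minimizer B g S \<gamma> u"
    and kkt: "B *v u - lam *\<^sub>R u = - g" and "e \<in> S" and "u \<bullet> e \<noteq> 0"
  shows "lam * (e \<bullet> e) \<le> e \<bullet> (B *v e)"
proof -
  define c where "c = - 2 * (u \<bullet> e) / (e \<bullet> e)"
  have "e \<noteq> 0"
    using assms(6) by auto
  then have ee: "0 < e \<bullet> e"
    by simp
  have norm_eq: "norm (u + c *\<^sub>R e) = norm u"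
    using norm_add_reflection[of c e u] ee unfolding c_def by (simp add: inner_commute)
  moreover have "u + c *\<^sub>R e \<in> S"
    using S min \<open>e \<in> S\<close> unfolding trs_minimizer_def by (simp add: subspace_add subspace_scale)
  ultimately have "0 \<le> trs_objective B g (u + c *\<^sub>R e) - trs_objective B g u"
    using min unfolding trs_minimizer_def by auto
  also have "\<dots> = c\<^sup>2 * (e \<bullet> (B *v e) - lam * (e \<bullet> e))"
    unfolding trs_objective_diff_on_sphere[OF symB kkt norm_eq]
    by (simp add: power2_eq_square algebra_simps)
  finally show ?thesis
    using assms(6) ee unfolding c_def by (simp add: zero_le_mult_iff)
qed

lemma trs_minimizer_second_order:
  fixes B :: "real^'n^'n"
  assumes symB: "transpose B = B" and S: "subspace S" and min: "trs_minimizer B g S \<gamma> u"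
    and "0 < \<gamma>" and kkt: "B *v u - lam *\<^sub>R u = - g" and "d \<in> S"
  shows "lam * (d \<bullet> d) \<le> d \<bullet> (B *v d)"
proof (cases "u \<bullet> d = 0")
  case True
  have uS: "u \<in> S" and uu: "u \<bullet> u = \<gamma>\<^sup>2"
    using min unfolding trs_minimizer_def by (auto simp: power2_norm_eq_inner)
  define f where "f t = (d \<bullet> (B *v d) - lam * (d \<bullet> d)) + 2 * t * (u \<bullet> (B *v d))
      + t\<^sup>2 * (u \<bullet> (B *v u) - lam * \<gamma>\<^sup>2)" for t
  have "0 \<le> f 0"
  proof (rule nonneg_at_0_if_nonneg_right)
    show "isCont f 0"
      unfolding f_def by (intro continuous_intros)
    fix t :: real assume "0 < t"
    have "u \<bullet> (d + t *\<^sub>R u) = t * \<gamma>\<^sup>2"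
      using True uu by (simp add: inner_add_right)
    moreover have "(d + t *\<^sub>R u) \<bullet> (d + t *\<^sub>R u) = d \<bullet> d + t\<^sup>2 * \<gamma>\<^sup>2"
      using True uu by (simp add: inner_add_left inner_add_right inner_commute power2_eq_square)
    moreover have "d + t *\<^sub>R u \<in> S"
      using S \<open>d \<in> S\<close> uS by (simp add: subspace_add subspace_scale)
    ultimately show "0 \<le> f t"
      using trs_second_order_nonorthogonal[OF symB S min kkt, of "d + t *\<^sub>R u"] \<open>0 < t\<close> \<open>0 < \<gamma>\<close>
      unfolding f_def quadratic_form_add_scaled[OF symB] by (simp add: algebra_simps)
  qed
  then show ?thesis
    unfolding f_def by simp
next
  case False
  then show ?thesis
    using trs_second_order_nonorthogonal[OF symB S min kkt \<open>d \<in> S\<close>] by blast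
qed

section \<open>From CRQopt to QEPmin\<close>

locale constrained_rq =
  fixes A :: "real^'n^'n" and C :: "real^'m^'n" and b :: "real^'m"
  assumes symmetric_A: "transpose A = A"
    and fewer_constraints: "CARD('m) < CARD('n)"
    and full_rank: "rank C = CARD('m)"
    and norm_n0_less_1: "norm (n0 C b) < 1"
begin

abbreviation N :: "(real^'n) set" where
  "N \<equiv> {u. transpose C *v u = 0}"

abbreviation PAP :: "real^'n^'n" where
  "PAP \<equiv> projP C ** A ** projP C"

lemma subspace_N: "subspace N"
  by (simp add: subspace_def matrix_vector_right_distrib matrix_vector_mult_scaleR)

lemma N_nontrivial: "\<exists>x\<in>N. x \<noteq> 0"
proof -
  have "\<not> inj ((*v) (transpose C))"
    using full_rank_injective[of "transpose C"] fewer_constraints full_rank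
    by (simp add: rank_transpose)
  then show ?thesis
    using linear_injective_0[OF matrix_vector_mul_linear] by blast
qed

lemma gam_pos: "0 < gam C b"
  using norm_n0_less_1 unfolding gam_def by (simp add: abs_square_less_1)

lemma gam_squared: "(gam C b)\<^sup>2 = 1 - (norm (n0 C b))\<^sup>2"
  using norm_n0_less_1 unfolding gam_def by (simp add: abs_square_less_1 less_imp_le)

lemma projP_in_N: "projP C *v x \<in> N"
  using transpose_mult_projP[OF full_rank] by simp

lemma symmetric_PAP: "transpose PAP = PAP"
  using symmetric_A symmetric_projP[OF full_rank] by (simp add: matrix_transpose_mul matrix_mul_assoc)

lemma PAP_mult_vector: "PAP *v x = projP C *v (A *v (projP C *v x))"
  by (simp add: matrix_vector_mul_assoc matrix_mul_assoc)

lemma PAP_in_N: "PAP *v x \<in> N"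
  unfolding PAP_mult_vector by (rule projP_in_N)

lemma b0_in_N: "b0 A C b \<in> N"
  unfolding b0_def by (rule projP_in_N)

lemma shift_in_N: "x \<in> N \<Longrightarrow> (PAP - lam *\<^sub>R mat 1) *v x \<in> N"
  using PAP_in_N by (simp add: matrix_shift_mult_vector matrix_vector_mult_diff_distrib
      matrix_vector_mult_scaleR)

lemma shift_projP_commute:
  "(PAP - lam *\<^sub>R mat 1) *v (projP C *v x) = projP C *v ((PAP - lam *\<^sub>R mat 1) *v x)"
proof -
  have "projP C *v (projP C *v x) = projP C *v x" and "projP C *v (PAP *v x) = PAP *v x"
    using projP_fixes_null[OF full_rank] projP_in_N PAP_in_N by auto
  then show ?thesis
    by (simp add: matrix_shift_mult_vector PAP_mult_vector matrix_vector_mult_diff_distrib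
        matrix_vector_mult_scaleR)
qed

lemma CRQ_feasible_iff: "CRQ_feasible C b (n0 C b + u) \<longleftrightarrow> u \<in> N \<and> norm u = gam C b"
proof -
  have "CRQ_feasible C b (n0 C b + u) \<longleftrightarrow> u \<in> N \<and> (norm (n0 C b + u))\<^sup>2 = 1"
    unfolding CRQ_feasible_def power2_norm_eq_inner
    by (auto simp: matrix_vector_right_distrib transpose_mult_n0[OF full_rank])
  also have "\<dots> \<longleftrightarrow> u \<in> N \<and> (norm u)\<^sup>2 = (gam C b)\<^sup>2"
    using n0_orthogonal_null[OF full_rank, of u b] gam_squared
    by (auto simp: power2_norm_eq_inner inner_add_left inner_add_right inner_commute)
  also have "\<dots> \<longleftrightarrow> u \<in> N \<and> norm u = gam C b"
    using less_imp_le[OF gam_pos] by simp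
  finally show ?thesis .
qed

lemma CRQ_objective:
  assumes "u \<in> N"
  shows "(n0 C b + u) \<bullet> (A *v (n0 C b + u)) = n0 C b \<bullet> (A *v n0 C b) + trs_objective PAP (b0 A C b) u"
proof -
  have Pu: "projP C *v u = u"
    using projP_fixes_null[OF full_rank] assms by simp
  have "u \<bullet> (A *v n0 C b) = b0 A C b \<bullet> u"
    unfolding b0_def using symmetric_matrix_inner[OF symmetric_projP[OF full_rank], of u] Pu
    by (metis inner_commute)
  moreover have "u \<bullet> (PAP *v u) = u \<bullet> (A *v u)"
    unfolding PAP_mult_vector using symmetric_matrix_inner[OF symmetric_projP[OF full_rank]] Pu
    by metis
  ultimately show ?thesis
    using symmetric_matrix_inner[OF symmetric_A, of u "n0 C b"] unfolding trs_objective_def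
    by (simp add: matrix_vector_right_distrib inner_add_left inner_add_right inner_commute)
qed

lemma CRQ_minimizer_if_trs_minimizer:
  assumes "trs_minimizer PAP (b0 A C b) N (gam C b) u"
  shows "CRQ_minimizer A C b (n0 C b + u)"
  unfolding CRQ_minimizer_def
proof (intro conjI allI impI)
  show "CRQ_feasible C b (n0 C b + u)"
    using assms unfolding trs_minimizer_def CRQ_feasible_iff by blast
  fix w assume "CRQ_feasible C b w"
  then have "w - n0 C b \<in> N" and "norm (w - n0 C b) = gam C b"
    using CRQ_feasible_iff[of "w - n0 C b"] by auto
  then show "(n0 C b + u) \<bullet> (A *v (n0 C b + u)) \<le> w \<bullet> (A *v w)"
    using assms CRQ_objective[of u] CRQ_objective[of "w - n0 C b"]
    unfolding trs_minimizer_def by force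
qed

lemma trs_solution_exists:
  obtains u lam where "u \<in> N" and "norm u = gam C b" and "(PAP - lam *\<^sub>R mat 1) *v u = - b0 A C b"
    and "\<And>d. d \<in> N \<Longrightarrow> lam * (d \<bullet> d) \<le> d \<bullet> (PAP *v d)"
proof -
  obtain u where min: "trs_minimizer PAP (b0 A C b) N (gam C b) u"
    using trs_minimizer_exists[OF subspace_N] N_nontrivial gam_pos by (meson less_imp_le)
  then obtain lam where kkt: "PAP *v u - lam *\<^sub>R u = - b0 A C b"
    using trs_minimizer_first_order[OF symmetric_PAP subspace_N _ b0_in_N gam_pos] PAP_in_N by blast
  show ?thesis
  proof (rule that)
    show "u \<in> N" and "norm u = gam C b"
      using min unfolding trs_minimizer_def by auto
    show "(PAP - lam *\<^sub>R mat 1) *v u = - b0 A C b"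
      using kkt by (simp add: matrix_shift_mult_vector)
    show "lam * (d \<bullet> d) \<le> d \<bullet> (PAP *v d)" if "d \<in> N" for d
      using trs_minimizer_second_order[OF symmetric_PAP subspace_N min gam_pos kkt that] .
  qed
qed

lemma QEP_feasible_iff:
  "QEP_feasible A C b lam z \<longleftrightarrow> z \<noteq> 0 \<and> z \<in> N \<and>
     (PAP - lam *\<^sub>R mat 1) *v ((PAP - lam *\<^sub>R mat 1) *v z)
       = ((b0 A C b \<bullet> z) / (gam C b)\<^sup>2) *\<^sub>R b0 A C b"
  unfolding QEP_feasible_def
  by (simp add: matrix_vector_mul_assoc[symmetric] scaleR_matrix_vector_assoc[symmetric]
      outer_mult_vector divide_inverse mult.commute)

text \<open>The QEP eigenvector is built from a preimage of \<open>u\<close> under the shifted matrix if there is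
  one, and from its kernel otherwise.\<close>
lemma QEP_feasible_if_trs_multiplier:
  assumes "u \<in> N" and "norm u = gam C b" and shift: "(PAP - lam *\<^sub>R mat 1) *v u = - b0 A C b"
  shows "\<exists>z. QEP_feasible A C b lam z"
proof -
  let ?M = "PAP - lam *\<^sub>R mat 1"
  have symM: "transpose ?M = ?M"
    using symmetric_PAP by (rule symmetric_matrix_shift)
  have Pu: "projP C *v u = u"
    using projP_fixes_null[OF full_rank] assms(1) by simp
  have b0z: "b0 A C b \<bullet> z = - (u \<bullet> (?M *v z))" for z
    using symmetric_matrix_inner[OF symM, of u z] shift by simp
  show ?thesis
  proof (cases "\<exists>y. ?M *v y = u")
    case True
    then obtain y where y: "?M *v y = u" by blast
    define z where "z = projP C *v y"
    have Mz: "?M *v z = u"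
      unfolding z_def using shift_projP_commute y Pu by simp
    then have "z \<noteq> 0"
      using assms(2) gam_pos by auto
    have "b0 A C b \<bullet> z = - (gam C b)\<^sup>2"
      using b0z Mz assms(2) power2_norm_eq_inner[of u] by simp
    then have "?M *v (?M *v z) = ((b0 A C b \<bullet> z) / (gam C b)\<^sup>2) *\<^sub>R b0 A C b"
      using Mz shift gam_pos by simp
    then show ?thesis
      unfolding QEP_feasible_iff using \<open>z \<noteq> 0\<close> projP_in_N[of y] z_def by blast
  next
    case False
    then obtain k where Mk: "?M *v k = 0" and "k \<bullet> u \<noteq> 0"
      using symmetric_matrix_range_if_orthogonal_kernel[OF symM] by blast
    define z where "z = projP C *v k"
    have Mz: "?M *v z = 0"
      unfolding z_def using shift_projP_commute Mk by simp
    have "z \<bullet> u = k \<bullet> u"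
      unfolding z_def using symmetric_matrix_inner[OF symmetric_projP[OF full_rank], of k u] Pu by simp
    then have "z \<noteq> 0"
      using \<open>k \<bullet> u \<noteq> 0\<close> by auto
    moreover have "b0 A C b \<bullet> z = 0"
      using b0z Mz by simp
    ultimately show ?thesis
      unfolding QEP_feasible_iff using Mz projP_in_N[of k] z_def by (intro exI[of _ z]) simp
  qed
qed

lemma QEP_minimizer_le_trs_multiplier:
  assumes "QEP_minimizer A C b lams zs"
    and "u \<in> N" and "norm u = gam C b" and "(PAP - lam *\<^sub>R mat 1) *v u = - b0 A C b"
  shows "lams \<le> lam"
  using assms QEP_feasible_if_trs_multiplier unfolding QEP_minimizer_def by blast

lemma QEP_minimizer_psd:
  assumes "QEP_minimizer A C b lams zs" and "d \<in> N"
  shows "lams * (d \<bullet> d) \<le> d \<bullet> (PAP *v d)"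
proof -
  obtain u lam where "u \<in> N" and "norm u = gam C b" and "(PAP - lam *\<^sub>R mat 1) *v u = - b0 A C b"
    and psd: "\<And>d. d \<in> N \<Longrightarrow> lam * (d \<bullet> d) \<le> d \<bullet> (PAP *v d)"
    using trs_solution_exists by blast
  then have "lams * (d \<bullet> d) \<le> lam * (d \<bullet> d)"
    using QEP_minimizer_le_trs_multiplier[OF assms(1)] by (simp add: mult_right_mono)
  then show ?thesis
    using psd[OF assms(2)] by linarith
qed

lemma CRQ_minimizer_if_shift_solution:
  assumes "QEP_minimizer A C b lams zs"
    and "u \<in> N" and "norm u = gam C b" and "(PAP - lams *\<^sub>R mat 1) *v u = - b0 A C b"
  shows "CRQ_minimizer A C b (n0 C b + u)"
proof (rule CRQ_minimizer_if_trs_minimizer)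
  show "trs_minimizer PAP (b0 A C b) N (gam C b) u"
    using assms(4) QEP_minimizer_psd[OF assms(1)]
    by (intro trs_minimizerI[OF symmetric_PAP subspace_N assms(2,3), where lam = lams])
      (simp_all add: matrix_shift_mult_vector)
qed

lemma CRQ_minimizer_nonorthogonal_case:
  assumes min: "QEP_minimizer A C b lams zs" and "b0 A C b \<bullet> zs \<noteq> 0"
  shows "CRQ_minimizer A C b
    (n0 C b - ((gam C b)\<^sup>2 / (b0 A C b \<bullet> zs)) *\<^sub>R ((PAP - lams *\<^sub>R mat 1) *v zs))"
proof -
  let ?M = "PAP - lams *\<^sub>R mat 1"
  define c where "c = - ((gam C b)\<^sup>2 / (b0 A C b \<bullet> zs))"
  define u where "u = c *\<^sub>R (?M *v zs)"
  have zs: "zs \<in> N" and MMzs: "?M *v (?M *v zs) = ((b0 A C b \<bullet> zs) / (gam C b)\<^sup>2) *\<^sub>R b0 A C b"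
    using min unfolding QEP_minimizer_def QEP_feasible_iff by auto
  have uN: "u \<in> N"
    unfolding u_def using shift_in_N[OF zs] by (simp add: matrix_vector_mult_scaleR)
  have Mu: "?M *v u = - b0 A C b"
    unfolding u_def c_def using MMzs assms(2) gam_pos by (simp add: matrix_vector_mult_scaleR)
  have "(norm u)\<^sup>2 = (gam C b)\<^sup>2"
  proof -
    have "(norm u)\<^sup>2 = c\<^sup>2 * (zs \<bullet> (?M *v (?M *v zs)))"
      unfolding u_def power2_norm_eq_inner
      using symmetric_matrix_inner[OF symmetric_matrix_shift[OF symmetric_PAP], of lams "?M *v zs" zs]
      by (simp add: power2_eq_square inner_commute)
    then show ?thesis
      unfolding MMzs c_def using assms(2) gam_pos by (simp add: inner_commute power2_eq_square)
  qed
  then have "norm u = gam C b"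
    using less_imp_le[OF gam_pos] by simp
  then show ?thesis
    using CRQ_minimizer_if_shift_solution[OF min uN _ Mu] unfolding u_def c_def by simp
qed

lemma QEP_minimizer_orthogonal_case:
  assumes min: "QEP_minimizer A C b lams zs" and "b0 A C b \<bullet> zs = 0"
  shows "(PAP - lams *\<^sub>R mat 1) *v zs = 0"
    and "\<exists>u\<in>N. norm u = gam C b \<and> (PAP - lams *\<^sub>R mat 1) *v u = - b0 A C b"
proof -
  let ?M = "PAP - lams *\<^sub>R mat 1"
  have zs: "zs \<noteq> 0" "zs \<in> N" and "?M *v (?M *v zs) = 0"
    using min assms(2) unfolding QEP_minimizer_def QEP_feasible_iff by auto
  then show Mzs: "?M *v zs = 0"
    using symmetric_matrix_kernel_of_square symmetric_matrix_shift[OF symmetric_PAP] by blast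
  obtain u lam where u: "u \<in> N" "norm u = gam C b" "(PAP - lam *\<^sub>R mat 1) *v u = - b0 A C b"
    and psd: "\<And>d. d \<in> N \<Longrightarrow> lam * (d \<bullet> d) \<le> d \<bullet> (PAP *v d)"
    using trs_solution_exists by blast
  \<comment> \<open>\<open>zs\<close> is an eigenvector of \<open>PAP\<close> for \<open>lams\<close>, so \<open>lam \<le> lams\<close>; the reverse
    inequality is the minimality of \<open>lams\<close>.\<close>
  have "lam * (zs \<bullet> zs) \<le> lams * (zs \<bullet> zs)"
    using psd[OF zs(2)] Mzs by (simp add: matrix_shift_mult_vector)
  then have "lam = lams"
    using QEP_minimizer_le_trs_multiplier[OF min u] zs(1) by simp
  then show "\<exists>u\<in>N. norm u = gam C b \<and> ?M *v u = - b0 A C b"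
    using u by blast
qed

lemma least_norm_shift_solution:
  assumes "u \<in> N" and shift: "(PAP - lam *\<^sub>R mat 1) *v u = - b0 A C b"
  defines "x \<equiv> - (mp_pinv (PAP - lam *\<^sub>R mat 1) *v b0 A C b)"
  shows "(PAP - lam *\<^sub>R mat 1) *v x = - b0 A C b" and "norm x \<le> norm u" and "x \<in> N"
    and "\<exists>v. x = (PAP - lam *\<^sub>R mat 1) *v v"
proof -
  let ?M = "PAP - lam *\<^sub>R mat 1"
  have symM: "transpose ?M = ?M"
    using symmetric_PAP by (rule symmetric_matrix_shift)
  have x: "x = mp_pinv ?M *v (- b0 A C b)"
    unfolding x_def by simp
  show Mx: "?M *v x = - b0 A C b" and "norm x \<le> norm u"
    and "\<exists>v. x = ?M *v v"
    unfolding x using mp_pinv_least_norm_solution[OF symM shift] by auto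
  then obtain v where v: "x = ?M *v v" by blast
  \<comment> \<open>\<open>x - P x\<close> lies both in the range and in the kernel of the symmetric matrix \<open>?M\<close>.\<close>
  have range: "?M *v (v - projP C *v v) = x - projP C *v x"
    using v shift_projP_commute by (simp add: matrix_vector_mult_diff_distrib)
  have "?M *v (x - projP C *v x) = 0"
    using Mx b0_in_N projP_fixes_null[OF full_rank] shift_projP_commute
    by (simp add: matrix_vector_mult_diff_distrib)
  then have "x - projP C *v x = 0"
    using symmetric_matrix_kernel_of_square[OF symM, of "v - projP C *v v"] range by simp
  then show "x \<in> N"
    using projP_in_N[of x] by simp
qed

lemma CRQ_minimizer_orthogonal_case:
  assumes min: "QEP_minimizer A C b lams zs" and "b0 A C b \<bullet> zs = 0"
  defines "xs \<equiv> - (mp_pinv (PAP - lams *\<^sub>R mat 1) *v b0 A C b)"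
  shows "norm xs \<le> gam C b"
    and "CRQ_minimizer A C b
      (n0 C b + xs + sqrt ((gam C b)\<^sup>2 - (norm xs)\<^sup>2) *\<^sub>R ((1 / norm zs) *\<^sub>R zs))"
proof -
  let ?M = "PAP - lams *\<^sub>R mat 1"
  obtain u where "u \<in> N" "norm u = gam C b" "?M *v u = - b0 A C b"
    using QEP_minimizer_orthogonal_case(2)[OF assms(1,2)] by blast
  note xs = least_norm_shift_solution[OF this(1,3), folded xs_def]
  then show nxs: "norm xs \<le> gam C b"
    using \<open>norm u = gam C b\<close> by simp
  have zs: "zs \<noteq> 0" "zs \<in> N" and Mzs: "?M *v zs = 0"
    using min QEP_minimizer_orthogonal_case(1)[OF assms(1,2)]
    unfolding QEP_minimizer_def QEP_feasible_iff by auto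
  define s where "s = sqrt ((gam C b)\<^sup>2 - (norm xs)\<^sup>2)"
  have "xs \<bullet> zs = 0"
    using xs(4) Mzs symmetric_matrix_inner[OF symmetric_matrix_shift[OF symmetric_PAP]] by force
  then have "norm (xs + s *\<^sub>R ((1 / norm zs) *\<^sub>R zs)) = gam C b"
    unfolding s_def using norm_add_scaled_orthogonal_unit zs(1) nxs by blast
  moreover have "xs + s *\<^sub>R ((1 / norm zs) *\<^sub>R zs) \<in> N"
    using xs(3) zs(2) by (simp add: matrix_vector_right_distrib matrix_vector_mult_scaleR)
  moreover have "?M *v (xs + s *\<^sub>R ((1 / norm zs) *\<^sub>R zs)) = - b0 A C b"
    using xs(1) Mzs by (simp add: matrix_vector_right_distrib matrix_vector_mult_scaleR)
  ultimately have "CRQ_minimizer A C b (n0 C b + (xs + s *\<^sub>R ((1 / norm zs) *\<^sub>R zs)))"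
    using CRQ_minimizer_if_shift_solution[OF min] by blast
  then show "CRQ_minimizer A C b (n0 C b + xs + s *\<^sub>R ((1 / norm zs) *\<^sub>R zs))"
    by (simp add: add.assoc)
qed

end

theorem theorem2p9:
  fixes A :: "real^'n^'n" and C :: "real^'m^'n" and b :: "real^'m"
    and lams :: real and zs :: "real^'n"
  assumes "transpose A = A"
    and "CARD('m) < CARD('n)"
    and "rank C = CARD('m)"
    and "norm (n0 C b) < 1"
    and "b0 A C b \<noteq> 0"
    and "QEP_minimizer A C b lams zs"
  shows "(b0 A C b \<bullet> zs \<noteq> 0 \<longrightarrow>
           CRQ_minimizer A C b
             (n0 C b - ((gam C b)\<^sup>2 / (b0 A C b \<bullet> zs)) *\<^sub>R
                ((projP C ** A ** projP C - lams *\<^sub>R mat 1) *v zs)))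
       \<and> (b0 A C b \<bullet> zs = 0 \<longrightarrow>
           (let xs = - (mp_pinv (projP C ** A ** projP C - lams *\<^sub>R mat 1) *v b0 A C b)
            in norm xs \<le> gam C b \<and>
               CRQ_minimizer A C b
                 (n0 C b + xs + sqrt ((gam C b)\<^sup>2 - (norm xs)\<^sup>2) *\<^sub>R ((1 / norm zs) *\<^sub>R zs))))"
proof -
  interpret constrained_rq A C b
    using assms(1-4) by unfold_locales
  show ?thesis
    using CRQ_minimizer_nonorthogonal_case[OF assms(6)] CRQ_minimizer_orthogonal_case[OF assms(6)]
    by (simp add: Let_def)
qed

end
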